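(* Let $\eta_1,\dots,\eta_n$ be admissible measures on $\mathbb R$. For each $i$ let $M_i(dx):=\cosh(x)\,\eta_i(dx)$, let $X_i\sim M_i$ be independent, and $U_i:=\tanh(X_i)\in[-1,1]$. Define $\Psi(y_1,\dots,y_n):=\frac12\big(\prod_{i=1}^n(1+y_i)-\prod_{i=1}^n(1-y_i)\big)$. Then each $M_i$ is a probability measure, $\mathbb E U_i=0$ for every $i$, and \[ T(\eta_1*\cdots*\eta_n)=\mathbb E|\Psi(U_1,\dots,U_n)|. \] Moreover, if $\bar\eta:=\frac1n\sum_i\eta_i$, $\bar M(dx):=\cosh(x)\bar\eta(dx)=\frac1n\sum_iM_i(dx)$, $\bar X\sim\bar M$, $\bar U:=\tanh(\bar X)$, and $\bar U_1,\dots,\bar U_n$ are i.i.d. copies of $\bar U$, then $T(\bar\eta^{*n})=\mathbb E|\Psi(\bar U_1,\dots,\bar U_n)|$, and the law of $\bar U$ is the arithmetic average of the laws of $U_1,\dots,U_n$.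
   Context: A finitely supported positive measure $\eta$ on $\mathbb R$ is called admissible if $\int e^x\,\eta(dx)=\int e^{-x}\,\eta(dx)=1$. $T(\eta):=\frac12\int_{\mathbb R}|e^x-e^{-x}|\,\eta(dx)$. $*$ denotes convolution and $\eta^{*n}$ the $n$-fold self-convolution. *)

theory Defs
  imports "HOL-Probability.Probability"
begin

text \<open>A finitely supported positive measure on the reals is represented by its
  weight function \<open>\<eta> :: real \<Rightarrow> real\<close> (the mass of the point x), with finite support.\<close>

definition supp_m :: "(real \<Rightarrow> real) \<Rightarrow> real set" where
  "supp_m \<eta> = {x. \<eta> x \<noteq> 0}"

definition fin_pos_measure :: "(real \<Rightarrow> real) \<Rightarrow> bool" where
  "fin_pos_measure \<eta> \<longleftrightarrow> finite (supp_m \<eta>) \<and> (\<forall>x. 0 \<le> \<eta> x)"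

definition admissible :: "(real \<Rightarrow> real) \<Rightarrow> bool" where
  "admissible \<eta> \<longleftrightarrow> fin_pos_measure \<eta>
     \<and> (\<Sum>x\<in>supp_m \<eta>. exp x * \<eta> x) = 1
     \<and> (\<Sum>x\<in>supp_m \<eta>. exp (- x) * \<eta> x) = 1"

definition T :: "(real \<Rightarrow> real) \<Rightarrow> real" where
  "T \<eta> = (1/2) * (\<Sum>x\<in>supp_m \<eta>. \<bar>exp x - exp (- x)\<bar> * \<eta> x)"

definition conv :: "(real \<Rightarrow> real) \<Rightarrow> (real \<Rightarrow> real) \<Rightarrow> real \<Rightarrow> real" where
  "conv \<eta> \<nu> z = (\<Sum>x\<in>supp_m \<eta>. \<eta> x * \<nu> (z - x))"

definition dirac0 :: "real \<Rightarrow> real" where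
  "dirac0 x = (if x = 0 then 1 else 0)"

fun convs :: "(nat \<Rightarrow> real \<Rightarrow> real) \<Rightarrow> nat \<Rightarrow> real \<Rightarrow> real" where
  "convs \<eta> 0 = dirac0"
| "convs \<eta> (Suc n) = conv (convs \<eta> n) (\<eta> n)"

definition Psi :: "nat \<Rightarrow> (nat \<Rightarrow> real) \<Rightarrow> real" where
  "Psi n y = (1/2) * ((\<Prod>i<n. 1 + y i) - (\<Prod>i<n. 1 - y i))"

definition cmeas :: "(real \<Rightarrow> real) \<Rightarrow> real measure" where
  "cmeas \<eta> = density (count_space UNIV) (\<lambda>x. ennreal (cosh x * \<eta> x))"

end

theory Submission
  imports Defs
begin

text \<open>Since \<open>cosh x * (1 \<plusminus> tanh x) = exp (\<plusminus>x)\<close>, the product \<open>\<Prod>i. cosh (x i)\<close> turns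
  \<open>Psi n (\<lambda>i. tanh (x i))\<close> into \<open>sinh (\<Sum>i. x i)\<close>. Expanding the expectation under the product
  of the tilted laws \<open>cosh x \<eta>\<^sub>i(dx)\<close> as a finite sum over tuples of atoms therefore gives
  \<open>\<Sum>\<bar>sinh (\<Sum>i. x i)\<bar> \<Prod>i. \<eta>\<^sub>i(x i)\<close>, which is \<open>\<integral>\<bar>sinh\<bar> d(\<eta>\<^sub>1 * \<dots> * \<eta>\<^sub>n) = T (\<eta>\<^sub>1 * \<dots> * \<eta>\<^sub>n)\<close>.
  Admissibility says exactly that \<open>\<integral>cosh d\<eta> = 1\<close> and \<open>\<integral>sinh d\<eta> = 0\<close>, and the tilt is linear
  in \<open>\<eta>\<close>, which gives the statements about the average.\<close>

lemma sum_supp_m_superset: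
  assumes "finite F" "supp_m \<eta> \<subseteq> F"
  shows "(\<Sum>x\<in>supp_m \<eta>. f x * \<eta> x) = (\<Sum>x\<in>F. f x * \<eta> x)"
  by (rule sum.mono_neutral_left) (use assms in \<open>auto simp: supp_m_def\<close>)

lemma supp_m_conv_subset:
  "supp_m (conv a b) \<subseteq> (\<lambda>(y, w). y + w) ` (supp_m a \<times> supp_m b)"
proof
  fix z assume "z \<in> supp_m (conv a b)"
  then obtain y where "y \<in> supp_m a" "a y * b (z - y) \<noteq> 0"
    by (auto simp: supp_m_def conv_def intro: sum.not_neutral_contains_not_neutral)
  then have "(y, z - y) \<in> supp_m a \<times> supp_m b" by (auto simp: supp_m_def)
  then show "z \<in> (\<lambda>(y, w). y + w) ` (supp_m a \<times> supp_m b)" by force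
qed

lemma finite_supp_m_conv:
  "finite (supp_m a) \<Longrightarrow> finite (supp_m b) \<Longrightarrow> finite (supp_m (conv a b))"
  by (rule finite_subset[OF supp_m_conv_subset]) auto

lemma supp_m_dirac0: "supp_m dirac0 = {0}"
  by (auto simp: supp_m_def dirac0_def)

lemma finite_supp_m_convs:
  "(\<And>i. i < n \<Longrightarrow> finite (supp_m (\<eta> i))) \<Longrightarrow> finite (supp_m (convs \<eta> n))"
  by (induction n) (simp_all add: supp_m_dirac0 finite_supp_m_conv)

lemma sum_supp_m_conv:
  assumes "finite (supp_m a)" "finite (supp_m b)"
  shows "(\<Sum>z\<in>supp_m (conv a b). h z * conv a b z)
       = (\<Sum>y\<in>supp_m a. a y * (\<Sum>w\<in>supp_m b. h (y + w) * b w))"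
proof -
  define F where "F = (\<lambda>(y, w). y + w) ` (supp_m a \<times> supp_m b)"
  have "finite F" using assms by (simp add: F_def)
  have shift: "(\<Sum>z\<in>F. h z * b (z - y)) = (\<Sum>w\<in>supp_m b. h (y + w) * b w)"
    if "y \<in> supp_m a" for y
  proof -
    have "(\<Sum>z\<in>F. h z * b (z - y)) = (\<Sum>w\<in>(\<lambda>z. z - y) ` F. h (y + w) * b w)"
      by (subst sum.reindex) (auto simp: inj_on_def)
    also have "\<dots> = (\<Sum>w\<in>supp_m b. h (y + w) * b w)"
      using \<open>finite F\<close> that by (intro sum_supp_m_superset[symmetric]) (force simp: F_def)+
    finally show ?thesis .
  qed
  have "(\<Sum>z\<in>supp_m (conv a b). h z * conv a b z) = (\<Sum>z\<in>F. h z * conv a b z)"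
    using \<open>finite F\<close> supp_m_conv_subset[of a b] by (intro sum_supp_m_superset) (auto simp: F_def)
  also have "\<dots> = (\<Sum>y\<in>supp_m a. a y * (\<Sum>z\<in>F. h z * b (z - y)))"
    by (simp add: conv_def sum_distrib_left sum.swap[of _ F] mult_ac)
  also have "\<dots> = (\<Sum>y\<in>supp_m a. a y * (\<Sum>w\<in>supp_m b. h (y + w) * b w))"
    by (simp add: shift)
  finally show ?thesis .
qed

lemma sum_supp_m_convs:
  assumes "\<And>i. i < n \<Longrightarrow> finite (supp_m (\<eta> i))"
  shows "(\<Sum>z\<in>supp_m (convs \<eta> n). h z * convs \<eta> n z)
     = (\<Sum>x\<in>PiE {..<n} (\<lambda>i. supp_m (\<eta> i)). h (\<Sum>i<n. x i) * (\<Prod>i<n. \<eta> i (x i)))"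
  using assms
proof (induction n arbitrary: h)
  case 0
  then show ?case by (simp add: supp_m_dirac0) (simp add: dirac0_def)
next
  case (Suc n)
  let ?S = "\<lambda>i. supp_m (\<eta> i)"
  have "(\<Sum>z\<in>supp_m (convs \<eta> (Suc n)). h z * convs \<eta> (Suc n) z)
      = (\<Sum>y\<in>supp_m (convs \<eta> n). (\<Sum>w\<in>?S n. h (y + w) * \<eta> n w) * convs \<eta> n y)"
    using Suc.prems by (simp add: sum_supp_m_conv finite_supp_m_convs mult.commute)
  also have "\<dots> = (\<Sum>x\<in>PiE {..<n} ?S. (\<Sum>w\<in>?S n. h ((\<Sum>i<n. x i) + w) * \<eta> n w) * (\<Prod>i<n. \<eta> i (x i)))"
    by (rule Suc.IH) (simp add: Suc.prems)
  also have "\<dots> = (\<Sum>x\<in>PiE {..<n} ?S. \<Sum>w\<in>?S n. h ((\<Sum>i<n. x i) + w) * (\<eta> n w * (\<Prod>i<n. \<eta> i (x i))))"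
    by (simp add: sum_distrib_right mult.assoc)
  also have "\<dots> = (\<Sum>(w, x)\<in>?S n \<times> PiE {..<n} ?S. h ((\<Sum>i<n. x i) + w) * (\<eta> n w * (\<Prod>i<n. \<eta> i (x i))))"
    by (subst sum.swap) (simp add: sum.cartesian_product)
  also have "\<dots> = (\<Sum>x\<in>PiE {..<Suc n} ?S. h (\<Sum>i<Suc n. x i) * (\<Prod>i<Suc n. \<eta> i (x i)))"
  proof (rule sum.reindex_bij_witness[of _ "\<lambda>x. (x n, x(n := undefined))" "\<lambda>(w, x). x(n := w)"])
    fix a assume "a \<in> ?S n \<times> PiE {..<n} ?S"
    then obtain w x where a: "a = (w, x)" by (cases a) auto
    have "(\<Sum>i<n. (x(n := w)) i) = (\<Sum>i<n. x i)" "(\<Prod>i<n. \<eta> i ((x(n := w)) i)) = (\<Prod>i<n. \<eta> i (x i))"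
      by (auto intro: sum.cong prod.cong)
    then show "h (\<Sum>i<Suc n. (case a of (w, x) \<Rightarrow> x(n := w)) i)
          * (\<Prod>i<Suc n. \<eta> i ((case a of (w, x) \<Rightarrow> x(n := w)) i))
        = (case a of (w, x) \<Rightarrow> h ((\<Sum>i<n. x i) + w) * (\<eta> n w * (\<Prod>i<n. \<eta> i (x i))))"
      by (simp add: a mult_ac add_ac)
  qed (auto simp: PiE_def extensional_def Pi_def)
  finally show ?case .
qed

definition average_m :: "nat \<Rightarrow> (nat \<Rightarrow> real \<Rightarrow> real) \<Rightarrow> real \<Rightarrow> real" where
  "average_m n \<eta> x = (\<Sum>i<n. \<eta> i x) / real n"

lemma supp_m_average_m_subset: "supp_m (average_m n \<eta>) \<subseteq> (\<Union>i<n. supp_m (\<eta> i))"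
  by (auto simp: supp_m_def average_m_def intro: sum.not_neutral_contains_not_neutral)

lemma sum_supp_m_average_m:
  assumes "\<And>i. i < n \<Longrightarrow> finite (supp_m (\<eta> i))"
  shows "(\<Sum>x\<in>supp_m (average_m n \<eta>). f x * average_m n \<eta> x)
       = (\<Sum>i<n. \<Sum>x\<in>supp_m (\<eta> i). f x * \<eta> i x) / real n"
proof -
  define F where "F = (\<Union>i<n. supp_m (\<eta> i))"
  have "finite F" using assms by (auto simp: F_def)
  have "(\<Sum>x\<in>supp_m (average_m n \<eta>). f x * average_m n \<eta> x) = (\<Sum>x\<in>F. f x * average_m n \<eta> x)"
    using \<open>finite F\<close> supp_m_average_m_subset unfolding F_def by (rule sum_supp_m_superset)
  also have "\<dots> = (\<Sum>x\<in>F. \<Sum>i<n. f x * \<eta> i x) / real n"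
    by (simp add: average_m_def sum_distrib_left sum_divide_distrib)
  also have "\<dots> = (\<Sum>i<n. \<Sum>x\<in>F. f x * \<eta> i x) / real n"
    by (subst sum.swap) (rule refl)
  also have "\<dots> = (\<Sum>i<n. \<Sum>x\<in>supp_m (\<eta> i). f x * \<eta> i x) / real n"
    using \<open>finite F\<close>
    by (intro arg_cong[where f="\<lambda>s. s / real n"] sum.cong refl sum_supp_m_superset[symmetric])
      (auto simp: F_def)
  finally show ?thesis .
qed

lemma admissible_nonneg: "admissible \<eta> \<Longrightarrow> 0 \<le> \<eta> x"
  by (simp add: admissible_def fin_pos_measure_def)

lemma admissible_finite_supp_m: "admissible \<eta> \<Longrightarrow> finite (supp_m \<eta>)"
  by (simp add: admissible_def fin_pos_measure_def)

lemma admissible_average_m: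
  assumes "n \<ge> 1" "\<And>i. i < n \<Longrightarrow> admissible (\<eta> i)"
  shows "admissible (average_m n \<eta>)"
proof -
  have fin: "\<And>i. i < n \<Longrightarrow> finite (supp_m (\<eta> i))"
    using assms by (simp add: admissible_finite_supp_m)
  then have "finite (supp_m (average_m n \<eta>))"
    by (auto intro: finite_subset[OF supp_m_average_m_subset])
  moreover have "0 \<le> average_m n \<eta> x" for x
    using assms by (auto simp: average_m_def admissible_nonneg intro!: divide_nonneg_nonneg sum_nonneg)
  moreover have "(\<Sum>i<n. \<Sum>x\<in>supp_m (\<eta> i). exp x * \<eta> i x) = real n"
    "(\<Sum>i<n. \<Sum>x\<in>supp_m (\<eta> i). exp (- x) * \<eta> i x) = real n"
    using assms(2) by (simp_all add: admissible_def)
  ultimately show ?thesis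
    using assms(1) sum_supp_m_average_m[of n \<eta> exp, OF fin] sum_supp_m_average_m[of n \<eta> "\<lambda>x. exp (- x)", OF fin]
    by (simp add: admissible_def fin_pos_measure_def assms(2))
qed

lemma admissible_sum_cosh:
  assumes "admissible \<eta>"
  shows "(\<Sum>x\<in>supp_m \<eta>. cosh x * \<eta> x) = 1"
proof -
  have "(\<Sum>x\<in>supp_m \<eta>. cosh x * \<eta> x)
      = ((\<Sum>x\<in>supp_m \<eta>. exp x * \<eta> x) + (\<Sum>x\<in>supp_m \<eta>. exp (- x) * \<eta> x)) / 2"
    by (simp add: cosh_field_def sum_divide_distrib[symmetric] sum.distrib[symmetric] algebra_simps)
  then show ?thesis using assms by (simp add: admissible_def)
qed

lemma admissible_sum_sinh:
  assumes "admissible \<eta>"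
  shows "(\<Sum>x\<in>supp_m \<eta>. sinh x * \<eta> x) = 0"
proof -
  have "(\<Sum>x\<in>supp_m \<eta>. sinh x * \<eta> x)
      = ((\<Sum>x\<in>supp_m \<eta>. exp x * \<eta> x) - (\<Sum>x\<in>supp_m \<eta>. exp (- x) * \<eta> x)) / 2"
    by (simp add: sinh_field_def sum_divide_distrib[symmetric] sum_subtractf[symmetric] algebra_simps)
  then show ?thesis using assms by (simp add: admissible_def)
qed

definition cosh_pmf :: "(real \<Rightarrow> real) \<Rightarrow> real pmf" where
  "cosh_pmf \<eta> = embed_pmf (\<lambda>x. cosh x * \<eta> x)"

lemma pmf_cosh_pmf:
  assumes "admissible \<eta>"
  shows "pmf (cosh_pmf \<eta>) x = cosh x * \<eta> x"
proof -
  have "(\<integral>\<^sup>+x. ennreal (cosh x * \<eta> x) \<partial>count_space UNIV) = (\<Sum>x\<in>supp_m \<eta>. ennreal (cosh x * \<eta> x))"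
    using admissible_finite_supp_m[OF assms] by (intro nn_integral_count_space') (auto simp: supp_m_def)
  also have "\<dots> = 1"
    using assms by (simp add: sum_ennreal admissible_nonneg admissible_sum_cosh)
  finally show ?thesis
    unfolding cosh_pmf_def using assms by (intro pmf_embed_pmf) (auto simp: admissible_nonneg)
qed

lemma set_cosh_pmf: "admissible \<eta> \<Longrightarrow> set_pmf (cosh_pmf \<eta>) = supp_m \<eta>"
  by (auto simp: set_pmf_iff pmf_cosh_pmf supp_m_def)

lemma cmeas_eq_measure_pmf: "admissible \<eta> \<Longrightarrow> cmeas \<eta> = measure_pmf (cosh_pmf \<eta>)"
  unfolding cmeas_def measure_pmf_eq_density by (simp add: pmf_cosh_pmf)

lemma prob_space_cmeas: "admissible \<eta> \<Longrightarrow> prob_space (cmeas \<eta>)"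
  by (simp add: cmeas_eq_measure_pmf measure_pmf.prob_space_axioms)

lemma integral_cmeas:
  fixes f :: "real \<Rightarrow> real"
  assumes "admissible \<eta>"
  shows "(\<integral>x. f x \<partial>cmeas \<eta>) = (\<Sum>x\<in>supp_m \<eta>. (cosh x * f x) * \<eta> x)"
  unfolding cmeas_eq_measure_pmf[OF assms]
  by (subst integral_measure_pmf[of "supp_m \<eta>"])
    (use assms in \<open>auto simp: admissible_finite_supp_m set_cosh_pmf pmf_cosh_pmf mult_ac\<close>)

lemma integral_tanh_cmeas: "admissible \<eta> \<Longrightarrow> (\<integral>x. tanh x \<partial>cmeas \<eta>) = 0"
  by (simp add: integral_cmeas tanh_def admissible_sum_sinh)

lemma measure_cmeas_average_m:
  assumes "n \<ge> 1" "\<And>i. i < n \<Longrightarrow> admissible (\<eta> i)"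
  shows "measure (cmeas (average_m n \<eta>)) B = (\<Sum>i<n. measure (cmeas (\<eta> i)) B) / real n"
proof -
  have "measure (cmeas \<theta>) B = (\<Sum>x\<in>supp_m \<theta>. (cosh x * indicator B x) * \<theta> x)"
    if "admissible \<theta>" for \<theta>
    using integral_cmeas[OF that, of "indicator B"] by (simp add: cmeas_def)
  then show ?thesis
    using assms admissible_average_m[OF assms]
    by (simp add: sum_supp_m_average_m admissible_finite_supp_m)
qed

lemma measure_distr_cmeas:
  "A \<in> sets borel \<Longrightarrow> measure (distr (cmeas \<eta>) borel f) A = measure (cmeas \<eta>) (f -` A)"
  by (simp add: cmeas_def measure_distr)

lemma PiM_measure_pmf_eq_distr_Pi_pmf:
  assumes "finite I"
  shows "PiM I (\<lambda>i. measure_pmf (p i))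
       = distr (measure_pmf (Pi_pmf I undefined p)) (PiM I (\<lambda>i. measure_pmf (p i))) (\<lambda>x. restrict x I)"
proof -
  interpret product_prob_space "\<lambda>i. measure_pmf (p i)"
    by (intro product_prob_spaceI) (simp add: measure_pmf.prob_space_axioms)
  show ?thesis
  proof (rule sym, rule PiM_eqI)
    fix A
    have "Pi\<^sub>E I A \<in> sets (Pi\<^sub>M I (\<lambda>i. measure_pmf (p i)))"
      using assms by (intro sets_PiM_I_finite) auto
    then have "emeasure (distr (measure_pmf (Pi_pmf I undefined p)) (PiM I (\<lambda>i. measure_pmf (p i)))
          (\<lambda>x. restrict x I)) (Pi\<^sub>E I A)
        = emeasure (measure_pmf (Pi_pmf I undefined p)) ((\<lambda>x. restrict x I) -` Pi\<^sub>E I A)"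
      by (subst emeasure_distr) (auto simp: space_PiM)
    also have "\<dots> = emeasure (measure_pmf (Pi_pmf I undefined p)) (PiE_dflt I undefined A)"
      by (intro emeasure_eq_AE AE_pmfI) (auto simp: PiE_dflt_def set_Pi_pmf assms)
    also have "\<dots> = (\<Prod>i\<in>I. emeasure (measure_pmf (p i)) (A i))"
      by (simp add: measure_pmf.emeasure_eq_measure measure_Pi_pmf_PiE_dflt assms prod_ennreal)
    finally show "emeasure (distr (measure_pmf (Pi_pmf I undefined p)) (PiM I (\<lambda>i. measure_pmf (p i)))
          (\<lambda>x. restrict x I)) (Pi\<^sub>E I A) = (\<Prod>i\<in>I. emeasure (measure_pmf (p i)) (A i))" .
  qed (simp_all add: assms)
qed

lemma integral_PiM_measure_pmf:
  fixes g :: "('i \<Rightarrow> 'a) \<Rightarrow> real"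
  assumes "finite I" "\<And>i. i \<in> I \<Longrightarrow> finite (set_pmf (p i))"
    and "g \<in> borel_measurable (PiM I (\<lambda>i. measure_pmf (p i)))"
  shows "(\<integral>x. g x \<partial>PiM I (\<lambda>i. measure_pmf (p i)))
       = (\<Sum>x\<in>PiE I (\<lambda>i. set_pmf (p i)). (\<Prod>i\<in>I. pmf (p i) (x i)) * g x)"
proof -
  let ?P = "Pi_pmf I undefined p"
  \<comment> \<open>With default value \<open>undefined\<close>, \<open>PiE_dflt\<close> is exactly the extensional \<open>PiE\<close>.\<close>
  have set_P: "set_pmf ?P = PiE I (\<lambda>i. set_pmf (p i))"
    using assms(1) by (auto simp: set_Pi_pmf PiE_dflt_def PiE_def extensional_def)
  have "(\<integral>x. g x \<partial>PiM I (\<lambda>i. measure_pmf (p i))) = (\<integral>x. g (restrict x I) \<partial>measure_pmf ?P)"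
    using assms by (subst PiM_measure_pmf_eq_distr_Pi_pmf) (auto simp: integral_distr space_PiM)
  also have "\<dots> = (\<Sum>x\<in>PiE I (\<lambda>i. set_pmf (p i)). pmf ?P x * g (restrict x I))"
    using assms by (subst integral_measure_pmf[of "PiE I (\<lambda>i. set_pmf (p i))"])
      (auto simp: set_P finite_PiE)
  also have "\<dots> = (\<Sum>x\<in>PiE I (\<lambda>i. set_pmf (p i)). (\<Prod>i\<in>I. pmf (p i) (x i)) * g x)"
    using assms(1) by (intro sum.cong) (auto simp: pmf_Pi' PiE_def extensional_def)
  finally show ?thesis .
qed

lemma prod_cosh_mult_Psi_tanh:
  "(\<Prod>i<n. cosh (x i)) * Psi n (\<lambda>i. tanh (x i)) = sinh (\<Sum>i<n. x i :: real)"
proof -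
  have "cosh t * (1 + tanh t) = exp t" "cosh t * (1 - tanh t) = exp (- t)" for t :: real
    by (simp_all add: tanh_def field_simps cosh_plus_sinh cosh_minus_sinh)
  then have "(\<Prod>i<n. cosh (x i)) * Psi n (\<lambda>i. tanh (x i))
      = ((\<Prod>i<n. exp (x i)) - (\<Prod>i<n. exp (- x i))) / 2"
    by (simp add: Psi_def right_diff_distrib prod.distrib[symmetric])
  also have "\<dots> = sinh (\<Sum>i<n. x i)"
    by (simp add: sinh_field_def exp_sum sum_negf[symmetric])
  finally show ?thesis .
qed

lemma T_eq_sum_abs_sinh: "T \<eta> = (\<Sum>x\<in>supp_m \<eta>. \<bar>sinh x\<bar> * \<eta> x)"
  by (simp add: T_def sinh_field_def sum_distrib_left)

lemma T_convs_eq_integral_Psi: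
  assumes adm: "\<And>i. i < n \<Longrightarrow> admissible (\<eta> i)"
  shows "T (convs \<eta> n) = (\<integral>x. \<bar>Psi n (\<lambda>i. tanh (x i))\<bar> \<partial>PiM {..<n} (\<lambda>i. cmeas (\<eta> i)))"
proof -
  let ?N = "PiM {..<n} (\<lambda>i. measure_pmf (cosh_pmf (\<eta> i)))"
  have N_eq: "PiM {..<n} (\<lambda>i. cmeas (\<eta> i)) = ?N"
    by (rule PiM_cong) (simp_all add: adm cmeas_eq_measure_pmf)
  have "(\<lambda>x. tanh (x i)) \<in> borel_measurable ?N" if "i \<in> {..<n}" for i
    by (rule measurable_compose[OF measurable_component_singleton]) (use that in auto)
  then have "(\<lambda>x. \<bar>Psi n (\<lambda>i. tanh (x i))\<bar>) \<in> borel_measurable ?N"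
    unfolding Psi_def
    by (intro borel_measurable_abs borel_measurable_times borel_measurable_diff borel_measurable_prod
        borel_measurable_add borel_measurable_const)
  then have "(\<integral>x. \<bar>Psi n (\<lambda>i. tanh (x i))\<bar> \<partial>?N)
      = (\<Sum>x\<in>PiE {..<n} (\<lambda>i. set_pmf (cosh_pmf (\<eta> i))).
           (\<Prod>i<n. pmf (cosh_pmf (\<eta> i)) (x i)) * \<bar>Psi n (\<lambda>i. tanh (x i))\<bar>)"
    using adm by (intro integral_PiM_measure_pmf) (auto simp: set_cosh_pmf admissible_finite_supp_m)
  also have "PiE {..<n} (\<lambda>i. set_pmf (cosh_pmf (\<eta> i))) = PiE {..<n} (\<lambda>i. supp_m (\<eta> i))"
    using adm by (intro PiE_cong) (simp add: set_cosh_pmf)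
  also have "(\<Sum>x\<in>PiE {..<n} (\<lambda>i. supp_m (\<eta> i)).
        (\<Prod>i<n. pmf (cosh_pmf (\<eta> i)) (x i)) * \<bar>Psi n (\<lambda>i. tanh (x i))\<bar>)
      = (\<Sum>x\<in>PiE {..<n} (\<lambda>i. supp_m (\<eta> i)). \<bar>sinh (\<Sum>i<n. x i)\<bar> * (\<Prod>i<n. \<eta> i (x i)))"
  proof (intro sum.cong refl)
    fix x assume "x \<in> PiE {..<n} (\<lambda>i. supp_m (\<eta> i))"
    have "(\<Prod>i<n. pmf (cosh_pmf (\<eta> i)) (x i)) = (\<Prod>i<n. cosh (x i)) * (\<Prod>i<n. \<eta> i (x i))"
      using adm by (simp add: pmf_cosh_pmf prod.distrib)
    moreover have "(\<Prod>i<n. \<eta> i (x i)) \<ge> 0" by (intro prod_nonneg) (simp add: adm admissible_nonneg)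
    moreover have "(\<Prod>i<n. cosh (x i)) > 0" by (simp add: prod_pos)
    ultimately show "(\<Prod>i<n. pmf (cosh_pmf (\<eta> i)) (x i)) * \<bar>Psi n (\<lambda>i. tanh (x i))\<bar>
        = \<bar>sinh (\<Sum>i<n. x i)\<bar> * (\<Prod>i<n. \<eta> i (x i))"
      by (simp add: abs_mult prod_cosh_mult_Psi_tanh[symmetric])
  qed
  also have "\<dots> = T (convs \<eta> n)"
    using adm by (simp add: T_eq_sum_abs_sinh sum_supp_m_convs admissible_finite_supp_m)
  finally show ?thesis
    unfolding N_eq by (rule sym)
qed

theorem lemma1:
  fixes \<eta> :: "nat \<Rightarrow> real \<Rightarrow> real" and n :: nat
  assumes "n \<ge> 1"
    and "\<forall>i<n. admissible (\<eta> i)"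
  defines "M \<equiv> (\<lambda>i. cmeas (\<eta> i))"
    and "\<eta>bar \<equiv> (\<lambda>x. (\<Sum>i<n. \<eta> i x) / real n)"
    and "Mbar \<equiv> cmeas (\<lambda>x. (\<Sum>i<n. \<eta> i x) / real n)"
  shows "(\<forall>i<n. prob_space (M i))
    \<and> (\<forall>i<n. (\<integral>x. tanh x \<partial>(M i)) = 0)
    \<and> T (convs \<eta> n) = (\<integral>x. \<bar>Psi n (\<lambda>i. tanh (x i))\<bar> \<partial>(PiM {..<n} M))
    \<and> T (convs (\<lambda>_. \<eta>bar) n) = (\<integral>x. \<bar>Psi n (\<lambda>i. tanh (x i))\<bar> \<partial>(PiM {..<n} (\<lambda>_. Mbar)))
    \<and> (\<forall>A\<in>sets borel. measure (distr Mbar borel tanh) A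
          = (\<Sum>i<n. measure (distr (M i) borel tanh) A) / real n)"
proof -
  have adm: "\<And>i. i < n \<Longrightarrow> admissible (\<eta> i)" using assms(2) by blast
  have avg: "\<eta>bar = average_m n \<eta>" "Mbar = cmeas (average_m n \<eta>)"
    by (simp_all add: \<eta>bar_def Mbar_def average_m_def[abs_def])
  have "admissible \<eta>bar"
    using admissible_average_m[OF assms(1) adm] by (simp add: avg)
  then have "T (convs (\<lambda>_. \<eta>bar) n) = (\<integral>x. \<bar>Psi n (\<lambda>i. tanh (x i))\<bar> \<partial>(PiM {..<n} (\<lambda>_. Mbar)))"
    using T_convs_eq_integral_Psi[of n "\<lambda>_. \<eta>bar"] by (simp add: avg)
  moreover have "measure (distr Mbar borel tanh) A = (\<Sum>i<n. measure (distr (M i) borel tanh) A) / real n"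
    if "A \<in> sets borel" for A
    using that by (simp add: avg M_def measure_distr_cmeas measure_cmeas_average_m[OF assms(1) adm])
  ultimately show ?thesis
    using adm by (simp add: M_def prob_space_cmeas integral_tanh_cmeas T_convs_eq_integral_Psi)
qed

end
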